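(* For every $n\ge 1$ and every $T\in\mathcal{T}_n$, $\varphi(\Xi_{\mathrm{poset}}(T))=\Xi_{\mathrm{bounce}}(T)$; that is, $\varphi\circ\Xi_{\mathrm{poset}}=\Xi_{\mathrm{bounce}}$. Consequently $\varphi$ is a bijection from $\mathcal{P}_n$ to $\mathcal{D}_n$.
   Context: For a finite set $S=\{x_1<\dots<x_n\}\subset\mathbb{R}$, define the partial order $\preceq_S$ on $[n]$ by $i\prec_S j$ iff $x_i+1<x_j$. A unit interval poset is a poset isomorphic to some $([n],\preceq_S)$; $\mathcal{P}_n$ is the set of unit interval posets with $n$ elements up to isomorphism. A plane tree is either a single node, or a root joined to an ordered (left-to-right) sequence of plane trees whose roots are its children; $\mathcal{T}_n$ is the set of plane trees with $n$ non-root nodes; the depth of a node is its distance to the root. A Dyck path of size $n$ is a lattice path from $(0,0)$ to $(n,n)$ with steps $\uparrow=(0,1)$ and $\rightarrow=(1,0)$ staying weakly above $y=x$; $\mathcal{D}_n$ is their set. $\Xi_{\mathrm{poset}}$: for $T\in\mathcal{T}_n$ with maximal number of children $m$, for a non-root node $u$ let $c(u)=i$ if $u$ is the $i$-th child of its parent counted from right to left; with $u_0=\text{root},\dots,u_{d(u)}=u$ the root-to-$u$ path set $x_u=d(u)+\sum_{i=1}^{d(u)}c(u_i)(m+2)^{-i}$; with $S=\{x_u\}$, $\Xi_{\mathrm{poset}}(T)=([n],\preceq_S)$. $\Xi_{\mathrm{bounce}}$: for $T\in\mathcal{T}_n$, list the nodes by increasing depth and, within the same depth, from right to left; let $w_0$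 (the root), $w_1,\dots,w_{n-1}$ be the first $n$ nodes of this list. $\Xi_{\mathrm{bounce}}(T)$ is the Dyck path whose number of north steps on the line $x=k$ equals the number of children of $w_k$, for $0\le k\le n-1$ (i.e. the path $\uparrow^{e_0}\rightarrow\uparrow^{e_1}\rightarrow\cdots\uparrow^{e_{n-1}}\rightarrow$ with $e_k$ the number of children of $w_k$). It is known that $\Xi_{\mathrm{bounce}}:\mathcal{T}_n\to\mathcal{D}_n$ is a bijection. $\varphi$: for a unit interval poset $P=([n],\preceq_S)$, choose the starting set $S$ so that $S\cap S^+=\varnothing$ where $S^+=\{x+1: x\in S\}$; write $S\cup S^+=\{y_1<\dots<y_{2n}\}$; $\varphi(P)$ is the Dyck path whose $i$-th step is $\uparrow$ if $y_i\in S$ and $\rightarrow$ otherwise. (It is known that this does not depend on the choice of $S$, so $\varphi$ is a well-defined map $\mathcal{P}_n\to\mathcal{D}_n$.) *)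

theory Defs
  imports Complex_Main
begin

datatype ptree = Node "ptree list"

fun children :: "ptree \<Rightarrow> ptree list" where
  "children (Node ts) = ts"

fun num_nodes :: "ptree \<Rightarrow> nat" where
  "num_nodes (Node ts) = (\<Sum>t\<leftarrow>ts. Suc (num_nodes t))"

fun max_children :: "ptree \<Rightarrow> nat" where
  "max_children (Node ts) = fold max (map max_children ts) (length ts)"

text \<open>The non-root nodes, each encoded by the list [c(u_1),...,c(u_d)] along its
  root-to-node path, where c(v) = i if v is the i-th child of its parent counted
  from right to left (starting at 1).\<close>
fun node_codes :: "ptree \<Rightarrow> nat list list"
and node_codes_list :: "ptree list \<Rightarrow> nat list list" where
  "node_codes (Node ts) = node_codes_list ts"
| "node_codes_list [] = []"
| "node_codes_list (t # ts) =
     (let c = Suc (length ts) in [c] # map (\<lambda>p. c # p) (node_codes t))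
     @ node_codes_list ts"

definition node_value :: "nat \<Rightarrow> nat list \<Rightarrow> real" where
  "node_value m cs = real (length cs)
     + (\<Sum>i=1..length cs. real (cs ! (i - 1)) * (real m + 2) powi (- int i))"

definition tree_set :: "ptree \<Rightarrow> real set" where
  "tree_set T = node_value (max_children T) ` set (node_codes T)"

definition uip_rel :: "real set \<Rightarrow> (nat \<times> nat) set" where
  "uip_rel S = (let n = card S; x = (\<lambda>i. sorted_list_of_set S ! (i - 1)) in
     {(i, j). i \<in> {1..n} \<and> j \<in> {1..n} \<and> (i = j \<or> x i + 1 < x j)})"

definition poset_iso :: "nat \<Rightarrow> (nat \<times> nat) set \<Rightarrow> (nat \<times> nat) set \<Rightarrow> bool" where
  "poset_iso n P Q \<longleftrightarrow> (\<exists>f. bij_betw f {1..n} {1..n} \<and>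
      (\<forall>i\<in>{1..n}. \<forall>j\<in>{1..n}. (i, j) \<in> P \<longleftrightarrow> (f i, f j) \<in> Q))"

definition iso_class :: "nat \<Rightarrow> (nat \<times> nat) set \<Rightarrow> (nat \<times> nat) set set" where
  "iso_class n P = {Q. Q \<subseteq> {1..n} \<times> {1..n} \<and> poset_iso n P Q}"

text \<open>\<P>_n: unit interval posets with n elements up to isomorphism.\<close>
definition UIP :: "nat \<Rightarrow> (nat \<times> nat) set set set" where
  "UIP n = {iso_class n (uip_rel S) | S. finite S \<and> card S = n}"

text \<open>A Dyck path is a list of steps, True = north step, False = east step.\<close>
definition Dyck :: "nat \<Rightarrow> bool list set" where
  "Dyck n = {w. length w = 2 * n \<and> count_list w True = n \<and>
     (\<forall>k\<le>length w. count_list (take k w) False \<le> count_list (take k w) True)}"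

definition shift1 :: "real set \<Rightarrow> real set" where
  "shift1 S = (\<lambda>x. x + 1) ` S"

definition dyck_of_set :: "real set \<Rightarrow> bool list" where
  "dyck_of_set S = map (\<lambda>y. y \<in> S) (sorted_list_of_set (S \<union> shift1 S))"

definition phi :: "nat \<Rightarrow> (nat \<times> nat) set set \<Rightarrow> bool list" where
  "phi n C = dyck_of_set (SOME S. finite S \<and> card S = n \<and> S \<inter> shift1 S = {}
                                   \<and> uip_rel S \<in> C)"

definition Xi_poset :: "ptree \<Rightarrow> (nat \<times> nat) set set" where
  "Xi_poset T = iso_class (num_nodes T) (uip_rel (tree_set T))"

definition level :: "ptree \<Rightarrow> nat \<Rightarrow> ptree list" where
  "level T d = ((\<lambda>ts. concat (map (\<lambda>t. rev (children t)) ts)) ^^ d) [T]"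

text \<open>All nodes by increasing depth, right to left within a depth (depth \<le> n suffices).\<close>
definition bfs_list :: "ptree \<Rightarrow> ptree list" where
  "bfs_list T = concat (map (level T) [0..<Suc (num_nodes T)])"

definition Xi_bounce :: "ptree \<Rightarrow> bool list" where
  "Xi_bounce T = concat (map (\<lambda>w. replicate (length (children w)) True @ [False])
                             (take (num_nodes T) (bfs_list T)))"

end

theory Submission
  imports Defs "HOL-Library.Multiset"
begin

text \<open>
  For a starting set S with S \<inter> (S + 1) = {}, the i-th north step of \<phi> lies on the line
  x = c_i, where c_i is the number of predecessors of the i-th element of S in the unit
  interval order. Sorted, these counts form the multiset of down-degrees of the poset, so
  they are an isomorphism invariant: \<phi> is well defined and injective. Conversely any
  admissible column sequence of a Dyck path is realised by adding points one at a time.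

  For a tree with at most m children per node, put B = m + 2. A node of depth d whose code
  has value N in base B sits at d + N / B^d, inside the unit interval above its depth. Its
  i-th child from the right sits at (d + 1) + (B N + i) / B^(d+1), while the node itself
  shifted by 1 sits at (d + 1) + B N / B^(d+1). So merging the values of depth d + 1 with
  the shifted values of depth d lists, for each node of depth d from right to left, one
  east step followed by a north step per child; concatenating over all depths gives the
  bounce path.
\<close>

lemma sorted_list_of_set_set_strict_sorted:
  "sorted_wrt (<) (xs :: 'a::linorder list) \<Longrightarrow> sorted_list_of_set (set xs) = xs"
  by (simp add: strict_sorted_iff sorted_list_of_set.idem_if_sorted_distinct)

lemma sorted_list_of_set_insert_less:
  assumes "finite A" "\<forall>z\<in>A. x < z"
  shows "sorted_list_of_set (insert (x::'a::linorder) A) = x # sorted_list_of_set A"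
proof -
  have "Min (insert x A) = x" using assms by (auto intro!: Min_eqI)
  moreover have "insert x A - {x} = A" using assms by auto
  ultimately show ?thesis using sorted_list_of_set_nonempty[of "insert x A"] assms by simp
qed

fun merge_marks :: "real list \<Rightarrow> real list \<Rightarrow> bool list" where
  "merge_marks [] ys = map (\<lambda>_. False) ys"
| "merge_marks (x # xs) [] = map (\<lambda>_. True) (x # xs)"
| "merge_marks (x # xs) (y # ys) =
     (if x < y then True # merge_marks xs (y # ys) else False # merge_marks (x # xs) ys)"

lemma merge_marks_Nil2 [simp]: "merge_marks xs [] = map (\<lambda>_. True) xs"
  by (cases xs) auto

lemma merge_marks_append_right:
  assumes "\<forall>y\<in>set ys. \<forall>x\<in>set xs. y < x"
  shows "merge_marks xs (ys @ zs) = map (\<lambda>_. False) ys @ merge_marks xs zs"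
  using assms by (induction ys; cases xs) auto

lemma merge_marks_append_left:
  assumes "\<forall>x\<in>set xs. \<forall>y\<in>set zs. x < y"
  shows "merge_marks (xs @ ys) zs = map (\<lambda>_. True) xs @ merge_marks ys zs"
  using assms by (induction xs; cases zs) auto

lemma merge_marks_append:
  assumes "\<forall>a\<in>set xs \<union> set ys. \<forall>b\<in>set xs' \<union> set ys'. a < b"
  shows "merge_marks (xs @ xs') (ys @ ys') = merge_marks xs ys @ merge_marks xs' ys'"
  using assms
proof (induction xs ys rule: merge_marks.induct)
  case (1 ys)
  then show ?case using merge_marks_append_right[of ys xs' ys'] by simp
next
  case (2 x xs)
  then show ?case using merge_marks_append_left[of "x # xs" ys' xs'] by simp
qed auto

lemma merge_marks_singleton:
  "\<forall>x\<in>set xs. y < x \<Longrightarrow> merge_marks xs [y] = False # map (\<lambda>_. True) xs"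
  by (cases xs) auto

lemma merge_marks_sorted_list_of_set:
  assumes "sorted_wrt (<) xs" "sorted_wrt (<) ys" "set xs \<inter> set ys = {}"
  shows "map (\<lambda>z. z \<in> set xs) (sorted_list_of_set (set xs \<union> set ys)) = merge_marks xs ys"
  using assms
proof (induction xs ys rule: merge_marks.induct)
  case (1 ys)
  then show ?case by (simp add: sorted_list_of_set_set_strict_sorted)
next
  case (2 x xs)
  then show ?case using sorted_list_of_set_set_strict_sorted[of "x # xs"] by simp
next
  case (3 x xs y ys)
  show ?case
  proof (cases "x < y")
    case True
    have U: "set (x # xs) \<union> set (y # ys) = insert x (set xs \<union> set (y # ys))" by auto
    have less: "\<forall>z\<in>set xs \<union> set (y # ys). x < z" using 3(3,4) True by auto
    have "map (\<lambda>z. z \<in> set (x # xs)) (sorted_list_of_set (set xs \<union> set (y # ys)))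
        = map (\<lambda>z. z \<in> set xs) (sorted_list_of_set (set xs \<union> set (y # ys)))"
    proof (rule map_cong[OF refl])
      fix z assume "z \<in> set (sorted_list_of_set (set xs \<union> set (y # ys)))"
      then have "z \<noteq> x" using less
        by (metis finite_set finite_Un set_sorted_list_of_set less_irrefl)
      then show "(z \<in> set (x # xs)) = (z \<in> set xs)" by simp
    qed
    also have "\<dots> = merge_marks xs (y # ys)" using 3(1)[OF True] 3(3-5) by auto
    finally show ?thesis using True U sorted_list_of_set_insert_less[OF _ less] by simp
  next
    case False
    have U: "set (x # xs) \<union> set (y # ys) = insert y (set (x # xs) \<union> set ys)" by auto
    have less: "\<forall>z\<in>set (x # xs) \<union> set ys. y < z" using 3(3-5) False by fastforce
    have "y \<notin> set (x # xs)" using 3(5) by auto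
    moreover have "map (\<lambda>z. z \<in> set (x # xs)) (sorted_list_of_set (set (x # xs) \<union> set ys))
        = merge_marks (x # xs) ys"
      using 3(2)[OF False] 3(3-5) by auto
    ultimately show ?thesis using False U sorted_list_of_set_insert_less[OF _ less] by simp
  qed
qed

section \<open>Lattice words from the columns of their north steps\<close>

text \<open>The lattice word that starts on the line x = k, has its i-th north step on the line
  x = cs ! i and ends on the line x = n.\<close>
fun word_of_columns :: "nat \<Rightarrow> nat list \<Rightarrow> nat \<Rightarrow> bool list" where
  "word_of_columns k [] n = replicate (n - k) False"
| "word_of_columns k (c # cs) n = replicate (c - k) False @ True # word_of_columns c cs n"

fun columns_of_word :: "nat \<Rightarrow> bool list \<Rightarrow> nat list" where
  "columns_of_word k [] = []"
| "columns_of_word k (False # w) = columns_of_word (Suc k) w"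
| "columns_of_word k (True # w) = k # columns_of_word k w"

lemma columns_of_word_ge: "c \<in> set (columns_of_word k w) \<Longrightarrow> k \<le> c"
  by (induction k w rule: columns_of_word.induct) fastforce+

lemma sorted_columns_of_word: "sorted (columns_of_word k w)"
  by (induction k w rule: columns_of_word.induct) (auto dest: columns_of_word_ge)

lemma length_columns_of_word: "length (columns_of_word k w) = count_list w True"
  by (induction k w rule: columns_of_word.induct) auto

lemma columns_of_word_replicate_False:
  "columns_of_word k (replicate j False @ w) = columns_of_word (k + j) w"
  by (induction j arbitrary: k) auto

lemma columns_of_word_of_columns:
  "sorted (k # cs) \<Longrightarrow> columns_of_word k (word_of_columns k cs n) = cs"
  by (induction k cs n rule: word_of_columns.induct)
    (simp_all add: columns_of_word_replicate_False
      columns_of_word_replicate_False[where w = "[]", simplified])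

lemma word_of_columns_Suc:
  assumes "\<forall>c\<in>set cs. Suc k \<le> c" "Suc k \<le> n"
  shows "word_of_columns k cs n = False # word_of_columns (Suc k) cs n"
proof (cases cs)
  case Nil
  have "n - k = Suc (n - Suc k)" using assms by simp
  then show ?thesis using Nil by simp
next
  case (Cons c cs')
  then have "c - k = Suc (c - Suc k)" using assms by auto
  then show ?thesis using Cons by simp
qed

lemma word_of_columns_of_word:
  "word_of_columns k (columns_of_word k w) (k + count_list w False) = w"
proof (induction k w rule: columns_of_word.induct)
  case (2 k w)
  have "word_of_columns k (columns_of_word (Suc k) w) (k + count_list (False # w) False)
      = False # word_of_columns (Suc k) (columns_of_word (Suc k) w) (Suc k + count_list w False)"
    by (subst word_of_columns_Suc) (auto dest: columns_of_word_ge)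
  then show ?case using 2 by simp
qed simp_all

lemma length_word_of_columns:
  "\<lbrakk>sorted (k # cs); \<forall>c\<in>set cs. c \<le> n; k \<le> n\<rbrakk>
     \<Longrightarrow> length (word_of_columns k cs n) = n - k + length cs"
  by (induction k cs n rule: word_of_columns.induct) auto

lemma count_True_word_of_columns: "count_list (word_of_columns k cs n) True = length cs"
  by (induction k cs n rule: word_of_columns.induct) auto

lemma count_list_replicate: "count_list (replicate m a) b = (if a = b then m else 0)"
  by (induction m) auto

lemma columns_of_word_ballot:
  assumes "\<forall>m. k + count_list (take m w) False \<le> t + count_list (take m w) True"
  shows "\<forall>j < length (columns_of_word k w). columns_of_word k w ! j \<le> t + j"
  using assms
proof (induction k w arbitrary: t rule: columns_of_word.induct)
  case (2 k w)
  have "\<forall>m. Suc k + count_list (take m w) False \<le> t + count_list (take m w) True"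
    using 2(2)[rule_format, of "Suc _"] by simp
  then show ?case using 2(1) by simp
next
  case (3 k w)
  have "\<forall>m. k + count_list (take m w) False \<le> Suc t + count_list (take m w) True"
    using 3(2)[rule_format, of "Suc _"] by simp
  then have "\<forall>j<length (columns_of_word k w). columns_of_word k w ! j \<le> Suc t + j"
    using 3(1) by blast
  moreover have "k \<le> t" using 3(2)[rule_format, of 0] by simp
  ultimately show ?case by (auto simp: nth_Cons split: nat.split)
qed simp

lemma word_of_columns_ballot:
  assumes "sorted (k # cs)" "\<forall>j<length cs. cs ! j \<le> t + j" "n \<le> t + length cs" "k \<le> t"
  shows "k + count_list (take m (word_of_columns k cs n)) False
     \<le> t + count_list (take m (word_of_columns k cs n)) True"
  using assms
proof (induction k cs n arbitrary: t m rule: word_of_columns.induct)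
  case (1 k n)
  then show ?case by (simp add: count_list_replicate min_def) arith
next
  case (2 k c cs n)
  have ct: "c \<le> t" using 2(3)[rule_format, of 0] by simp
  have kc: "k \<le> c" using 2(2) by simp
  show ?case
  proof (cases "m \<le> c - k")
    case True
    then show ?thesis using ct kc by (simp add: count_list_replicate min_def)
  next
    case False
    then obtain q where q: "m = (c - k) + Suc q" by (metis add_Suc_right less_imp_Suc_add not_le)
    have "c + count_list (take q (word_of_columns c cs n)) False
        \<le> Suc t + count_list (take q (word_of_columns c cs n)) True"
      by (rule 2(1)) (use 2(2-5) in \<open>auto simp: nth_Cons_Suc\<close>)
    then show ?thesis using q kc by (simp add: count_list_replicate)
  qed
qed

lemma word_of_columns_same: "word_of_columns k (map (\<lambda>_. k) xs) k = map (\<lambda>_. True) xs"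
  by (induction xs) auto

lemma merge_marks_eq_word_of_columns:
  assumes "sorted_wrt (<) xs" "sorted_wrt (<) ys" "set xs \<inter> set ys = {}"
  shows "merge_marks xs ys
     = word_of_columns k (map (\<lambda>x. k + length (filter (\<lambda>y. y < x) ys)) xs) (k + length ys)"
  using assms
proof (induction xs ys arbitrary: k rule: merge_marks.induct)
  case (1 ys)
  then show ?case by (simp add: map_replicate_const)
next
  case (2 x xs)
  then show ?case using word_of_columns_same[of k "x # xs"] by simp
next
  case (3 x xs y ys)
  show ?case
  proof (cases "x < y")
    case True
    then have "filter (\<lambda>y'. y' < x) (y # ys) = []" using 3(4) by (auto simp: filter_empty_conv)
    then show ?thesis using 3(1)[OF True, of k] 3(3-5) True by simp
  next
    case False
    define cs where "cs = map (\<lambda>z. Suc k + length (filter (\<lambda>y'. y' < z) ys)) (x # xs)"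
    have "\<forall>z\<in>set (x # xs). y < z" using 3(3,5) False by fastforce
    then have "map (\<lambda>z. k + length (filter (\<lambda>y'. y' < z) (y # ys))) (x # xs) = cs"
      unfolding cs_def by (intro map_cong) auto
    moreover have "word_of_columns k cs (k + length (y # ys))
        = False # word_of_columns (Suc k) cs (Suc k + length ys)"
      unfolding cs_def by (subst word_of_columns_Suc) auto
    moreover have "merge_marks (x # xs) ys = word_of_columns (Suc k) cs (Suc k + length ys)"
      unfolding cs_def using 3(2)[OF False, of "Suc k"] 3(3-5) by auto
    ultimately show ?thesis using False by simp
  qed
qed

section \<open>Predecessor counts of a starting set\<close>

text \<open>For a finite set S, entry j of the list counts the y \<in> S with y + 1 below the
  (j+1)-st smallest element of S, i.e. the number of predecessors of j+1 in
  (uip_rel S).\<close>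
definition pred_counts :: "real set \<Rightarrow> nat list" where
  "pred_counts S = map (\<lambda>x. card {y\<in>S. y + 1 < x}) (sorted_list_of_set S)"

lemma length_pred_counts: "finite S \<Longrightarrow> length (pred_counts S) = card S"
  by (simp add: pred_counts_def)

lemma nth_pred_counts:
  "\<lbrakk>finite S; j < card S\<rbrakk> \<Longrightarrow> pred_counts S ! j = card {y\<in>S. y + 1 < sorted_list_of_set S ! j}"
  by (simp add: pred_counts_def)

lemma sorted_pred_counts: "finite S \<Longrightarrow> sorted (pred_counts S)"
  unfolding pred_counts_def sorted_map
  by (rule sorted_wrt_mono_rel[OF _ sorted_sorted_list_of_set]) (auto intro!: card_mono)

lemma dyck_of_set_eq_word_of_columns:
  assumes "finite S" "S \<inter> shift1 S = {}"
  shows "dyck_of_set S = word_of_columns 0 (pred_counts S) (card S)"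
proof -
  define xs where "xs = sorted_list_of_set S"
  define ys where "ys = map (\<lambda>x. x + 1) xs"
  have xs: "sorted_wrt (<) xs" "set xs = S" "length xs = card S" "distinct xs"
    using assms xs_def by auto
  have ys: "sorted_wrt (<) ys" "set ys = shift1 S"
    using xs unfolding ys_def shift1_def by (auto simp: sorted_wrt_map)
  have disj: "set xs \<inter> set ys = {}" using xs(2) ys(2) assms(2) by simp
  have "map (\<lambda>x. length (filter (\<lambda>y. y < x) ys)) xs = pred_counts S"
    unfolding pred_counts_def xs_def[symmetric] ys_def
    using xs(2,4) by (intro map_cong) (auto simp: filter_map comp_def distinct_length_filter
        intro!: arg_cong[where f=card])
  then have "merge_marks xs ys = word_of_columns 0 (pred_counts S) (card S)"
    using merge_marks_eq_word_of_columns[OF xs(1) ys(1) disj, of 0] xs(3) by (simp add: ys_def)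
  moreover have "dyck_of_set S = merge_marks xs ys"
    using merge_marks_sorted_list_of_set[OF xs(1) ys(1) disj]
    unfolding dyck_of_set_def xs(2) ys(2) .
  ultimately show ?thesis by simp
qed

lemma nth_sorted_list_of_set_in_downset_iff:
  fixes S :: "'a::linorder set"
  assumes "finite S" "A \<subseteq> S" and down: "\<And>y z. y \<in> A \<Longrightarrow> z \<in> S \<Longrightarrow> z \<le> y \<Longrightarrow> z \<in> A"
    and "i < card S"
  shows "sorted_list_of_set S ! i \<in> A \<longleftrightarrow> i < card A"
proof -
  define xs where "xs = sorted_list_of_set S"
  have xs: "sorted xs" "distinct xs" "set xs = S" "length xs = card S"
    using assms(1) xs_def by auto
  have fin: "finite A" using assms(1,2) finite_subset by blast
  have i: "i < length xs" using assms(4) xs(4) by simp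
  show ?thesis unfolding xs_def[symmetric]
  proof
    assume "xs ! i \<in> A"
    then have "(!) xs ` {0..i} \<subseteq> A"
      using xs(1,3) i by (auto intro!: down[of "xs ! i"] sorted_nth_mono)
    then have "card ((!) xs ` {0..i}) \<le> card A" by (rule card_mono[OF fin])
    moreover have "card ((!) xs ` {0..i}) = Suc i"
      using xs(2) i by (subst card_image) (auto intro!: inj_on_nth)
    ultimately show "i < card A" by simp
  next
    assume "i < card A"
    show "xs ! i \<in> A"
    proof (rule ccontr)
      assume notin: "xs ! i \<notin> A"
      have "A \<subseteq> (!) xs ` {0..<i}"
      proof
        fix y assume y: "y \<in> A"
        then obtain k where k: "k < length xs" "y = xs ! k"
          using assms(2) xs(3) by (metis in_set_conv_nth subsetD)
        have "k < i"
        proof (rule ccontr)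
          assume "\<not> k < i"
          then have "xs ! i \<le> y" using sorted_nth_mono[OF xs(1)] k by simp
          moreover have "xs ! i \<in> S" using i xs(3) nth_mem by blast
          ultimately show False using down[OF y] notin by blast
        qed
        then show "y \<in> (!) xs ` {0..<i}" using k by auto
      qed
      then have "card A \<le> card ((!) xs ` {0..<i})" by (simp add: card_mono)
      also have "\<dots> \<le> i" using card_image_le[of "{0..<i}" "(!) xs"] by simp
      finally show False using \<open>i < card A\<close> by simp
    qed
  qed
qed

lemma sorted_list_of_set_nth_plus_one_less_iff:
  assumes "finite S" "i < card S" "j < card S"
  shows "sorted_list_of_set S ! i + 1 < sorted_list_of_set S ! j \<longleftrightarrow> i < pred_counts S ! j"
proof -
  have "sorted_list_of_set S ! i \<in> S"
    using assms(1,2) by (metis nth_mem length_sorted_list_of_set set_sorted_list_of_set)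
  then show ?thesis
    unfolding nth_pred_counts[OF assms(1,3)]
    by (subst nth_sorted_list_of_set_in_downset_iff[symmetric]) (use assms in auto)
qed

lemma pred_counts_nth_le: "\<lbrakk>finite S; j < card S\<rbrakk> \<Longrightarrow> pred_counts S ! j \<le> j"
  using sorted_list_of_set_nth_plus_one_less_iff[of S j j] by auto

lemma uip_rel_iff:
  "(i, j) \<in> uip_rel S \<longleftrightarrow> i \<in> {1..card S} \<and> j \<in> {1..card S} \<and>
     (i = j \<or> sorted_list_of_set S ! (i - 1) + 1 < sorted_list_of_set S ! (j - 1))"
  by (simp add: uip_rel_def Let_def)

lemma uip_rel_subset: "uip_rel S \<subseteq> {1..card S} \<times> {1..card S}"
  by (auto simp: uip_rel_def Let_def)

lemma uip_rel_iff_pred_counts: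
  assumes "finite S" "i \<in> {1..card S}" "j \<in> {1..card S}"
  shows "(i, j) \<in> uip_rel S \<longleftrightarrow> i = j \<or> i \<le> pred_counts S ! (j - 1)"
proof -
  have "i - 1 < card S" "j - 1 < card S" "i - 1 < pred_counts S ! (j - 1) \<longleftrightarrow> i \<le> pred_counts S ! (j - 1)"
    using assms by auto
  then show ?thesis
    using assms sorted_list_of_set_nth_plus_one_less_iff[OF assms(1), of "i - 1" "j - 1"]
    by (simp add: uip_rel_iff)
qed

lemma uip_rel_eq_if_pred_counts_eq:
  assumes "finite S" "finite S'" "card S = card S'" "pred_counts S = pred_counts S'"
  shows "uip_rel S = uip_rel S'"
proof (intro set_eqI, clarify)
  fix i j
  show "(i, j) \<in> uip_rel S \<longleftrightarrow> (i, j) \<in> uip_rel S'"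
  proof (cases "i \<in> {1..card S} \<and> j \<in> {1..card S}")
    case True
    then show ?thesis
      using uip_rel_iff_pred_counts[OF assms(1)] uip_rel_iff_pred_counts[OF assms(2)] assms(3,4)
      by simp
  qed (use assms(3) in \<open>auto simp: uip_rel_iff\<close>)
qed

definition down_degree :: "nat \<Rightarrow> (nat \<times> nat) set \<Rightarrow> nat \<Rightarrow> nat" where
  "down_degree n R j = card {i\<in>{1..n}. i \<noteq> j \<and> (i, j) \<in> R}"

lemma pred_counts_eq_down_degrees:
  assumes "finite S"
  shows "pred_counts S = map (down_degree (card S) (uip_rel S)) [1..<Suc (card S)]"
proof (rule nth_equalityI)
  fix j assume "j < length (pred_counts S)"
  then have j: "j < card S" using assms by (simp add: length_pred_counts)
  have "{i\<in>{1..card S}. i \<noteq> Suc j \<and> (i, Suc j) \<in> uip_rel S} = {1..pred_counts S ! j}"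
    using uip_rel_iff_pred_counts[OF assms, of _ "Suc j"] j pred_counts_nth_le[OF assms j] by auto
  then show "pred_counts S ! j = map (down_degree (card S) (uip_rel S)) [1..<Suc (card S)] ! j"
    using j by (simp add: down_degree_def nth_append del: upt_Suc)
qed (simp add: length_pred_counts assms del: upt_Suc)

lemma poset_iso_down_degree:
  assumes f: "bij_betw f {1..n} {1..n}"
    and iso: "\<forall>i\<in>{1..n}. \<forall>j\<in>{1..n}. (i, j) \<in> P \<longleftrightarrow> (f i, f j) \<in> Q"
    and j: "j \<in> {1..n}"
  shows "down_degree n P j = down_degree n Q (f j)"
proof -
  define X where "X = {i\<in>{1..n}. i \<noteq> j \<and> (i, j) \<in> P}"
  have inj: "inj_on f {1..n}" using f by (rule bij_betw_imp_inj_on)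
  have "f ` X = {i\<in>{1..n}. i \<noteq> f j \<and> (i, f j) \<in> Q}"
  proof (intro equalityI subsetI)
    fix i' assume "i' \<in> f ` X"
    then obtain i where i: "i \<in> X" "i' = f i" by blast
    then have "f i \<noteq> f j" using inj j unfolding X_def by (auto dest: inj_onD)
    then show "i' \<in> {i\<in>{1..n}. i \<noteq> f j \<and> (i, f j) \<in> Q}"
      using i iso j bij_betw_apply[OF f] unfolding X_def by auto
  next
    fix i' assume i': "i' \<in> {i\<in>{1..n}. i \<noteq> f j \<and> (i, f j) \<in> Q}"
    then obtain i where "i \<in> {1..n}" "i' = f i" using bij_betw_imp_surj_on[OF f] by blast
    then show "i' \<in> f ` X" using i' iso j unfolding X_def by auto
  qed
  moreover have "inj_on f X" using inj by (rule inj_on_subset) (auto simp: X_def)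
  ultimately show ?thesis unfolding down_degree_def X_def[symmetric] by (metis card_image)
qed

lemma mset_down_degrees_poset_iso:
  assumes "poset_iso n P Q"
  shows "mset (map (down_degree n P) [1..<Suc n]) = mset (map (down_degree n Q) [1..<Suc n])"
proof -
  obtain f where f: "bij_betw f {1..n} {1..n}"
    "\<forall>i\<in>{1..n}. \<forall>j\<in>{1..n}. (i, j) \<in> P \<longleftrightarrow> (f i, f j) \<in> Q"
    using assms unfolding poset_iso_def by blast
  have range: "mset [1..<Suc n] = mset_set {1..n}"
    by (simp only: mset_upt atLeastLessThanSuc_atLeastAtMost)
  have "mset (map (down_degree n P) [1..<Suc n]) = image_mset (down_degree n P) (mset_set {1..n})"
    by (simp only: mset_map range)
  also have "\<dots> = image_mset (down_degree n Q \<circ> f) (mset_set {1..n})"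
    by (rule image_mset_cong) (simp add: poset_iso_down_degree[OF f])
  also have "\<dots> = image_mset (down_degree n Q) (mset_set (f ` {1..n}))"
    using f(1) by (simp add: bij_betw_def image_mset_mset_set flip: image_mset.comp)
  also have "\<dots> = mset (map (down_degree n Q) [1..<Suc n])"
    using f(1) by (simp only: bij_betw_def mset_map range)
  finally show ?thesis .
qed

text \<open>Sorted, the predecessor counts are the multiset of down-degrees of the poset.\<close>
lemma pred_counts_eq_if_poset_iso:
  assumes "finite S" "finite S'" "card S = n" "card S' = n"
    and "poset_iso n (uip_rel S) (uip_rel S')"
  shows "pred_counts S = pred_counts S'"
proof -
  have "mset (pred_counts S) = mset (pred_counts S')"
    using mset_down_degrees_poset_iso[OF assms(5)]
    by (simp add: pred_counts_eq_down_degrees assms(1-4) del: upt_Suc)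
  then have "sort (pred_counts S) = pred_counts S'"
    by (rule properties_for_sort[OF sym sorted_pred_counts[OF assms(2)]])
  then show ?thesis using sorted_sort_id[OF sorted_pred_counts[OF assms(1)]] by simp
qed

section \<open>Starting sets avoiding their unit shift\<close>

lemma exists_factor_below_one:
  fixes D :: "real set"
  assumes "finite D" "\<forall>d\<in>D. 1 < d"
  obtains l where "0 < l" "l < 1" "\<forall>d\<in>D. 1 < l * d"
proof -
  have "\<forall>\<^sub>F l in at_left 1. 1 < l * d" if "d \<in> D" for d
  proof (rule order_tendstoD(1))
    show "((\<lambda>l. l * d) \<longlongrightarrow> 1 * d) (at_left 1)" by (intro tendsto_intros)
  qed (use assms that in simp)
  then have ev: "\<forall>\<^sub>F l in at_left 1. (\<forall>d\<in>D. 1 < l * d) \<and> l \<in> {0<..<1}"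
    using assms(1) by (intro eventually_conj eventually_ball_finite eventually_at_left_real) auto
  then show ?thesis using that eventually_happens'[OF _ ev] by auto
qed

text \<open>Shrinking by a factor slightly below 1 keeps every gap that exceeds 1 above 1 and
  makes every other gap smaller than 1.\<close>
lemma exists_scaling_avoiding_unit_gaps:
  fixes S :: "real set"
  assumes "finite S"
  obtains l where "0 < l" "\<And>x y. \<lbrakk>x \<in> S; y \<in> S\<rbrakk> \<Longrightarrow> l * x + 1 < l * y \<longleftrightarrow> x + 1 < y"
    "\<And>x y. \<lbrakk>x \<in> S; y \<in> S\<rbrakk> \<Longrightarrow> l * x + 1 \<noteq> l * y"
proof -
  define D where "D = {y - x | x y. x \<in> S \<and> y \<in> S \<and> 1 < y - x}"
  have "D \<subseteq> (\<lambda>(x, y). y - x) ` (S \<times> S)" unfolding D_def by auto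
  then have "finite D"
    using finite_subset finite_imageI[OF finite_cartesian_product[OF assms assms]] by blast
  moreover have "\<forall>d\<in>D. 1 < d" unfolding D_def by auto
  ultimately obtain l where l: "0 < l" "l < 1" "\<forall>d\<in>D. 1 < l * d"
    by (rule exists_factor_below_one)
  have small: "l * d < 1" if "d \<le> 1" for d
  proof (cases "0 < d")
    case True
    then have "l * d < 1 * d" using l(2) by (intro mult_strict_right_mono)
    then show ?thesis using that by simp
  next
    case False
    then have "l * d \<le> 0" using l(1) by (simp add: mult_nonneg_nonpos)
    then show ?thesis by simp
  qed
  have dichotomy: "(1 < y - x \<and> 1 < l * (y - x)) \<or> (y - x \<le> 1 \<and> l * (y - x) < 1)" if "x \<in> S" "y \<in> S" for x y
  proof (cases "1 < y - x")
    case True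
    then have "y - x \<in> D" unfolding D_def using that by blast
    then show ?thesis using True l(3) by blast
  qed (use small[of "y - x"] in simp)
  show ?thesis
  proof (rule that[OF l(1)])
    fix x y assume "x \<in> S" "y \<in> S"
    from dichotomy[OF this] show "l * x + 1 < l * y \<longleftrightarrow> x + 1 < y" "l * x + 1 \<noteq> l * y"
      by (auto simp: algebra_simps)
  qed
qed

lemma exists_avoiding_set_same_uip_rel:
  fixes S :: "real set"
  assumes "finite S"
  obtains S' where "finite S'" "card S' = card S" "S' \<inter> shift1 S' = {}" "uip_rel S' = uip_rel S"
proof -
  obtain l where l: "0 < l" "\<And>x y. \<lbrakk>x \<in> S; y \<in> S\<rbrakk> \<Longrightarrow> l * x + 1 < l * y \<longleftrightarrow> x + 1 < y"
    "\<And>x y. \<lbrakk>x \<in> S; y \<in> S\<rbrakk> \<Longrightarrow> l * x + 1 \<noteq> l * y"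
    using exists_scaling_avoiding_unit_gaps[OF assms] by blast
  define xs where "xs = sorted_list_of_set S"
  have xs: "sorted_wrt (<) xs" "set xs = S" "length xs = card S" using assms xs_def by auto
  define S' where "S' = (\<lambda>x. l * x) ` S"
  have "inj_on (\<lambda>x. l * x) S" using l(1) by (auto simp: inj_on_def)
  then have card: "card S' = card S" unfolding S'_def by (rule card_image)
  have "sorted_wrt (<) (map (\<lambda>x. l * x) xs)"
    unfolding sorted_wrt_map by (rule sorted_wrt_mono_rel[OF _ xs(1)]) (use l(1) in simp)
  then have sl: "sorted_list_of_set S' = map (\<lambda>x. l * x) xs"
    using sorted_list_of_set_set_strict_sorted xs(2) unfolding S'_def by (metis list.set_map)
  have "uip_rel S' = uip_rel S"
  proof (intro set_eqI, clarify)
    fix i j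
    show "(i, j) \<in> uip_rel S' \<longleftrightarrow> (i, j) \<in> uip_rel S"
    proof (cases "i \<in> {1..card S} \<and> j \<in> {1..card S}")
      case True
      then have "i - 1 < length xs" "j - 1 < length xs" using xs(3) by auto
      moreover from this have "xs ! (i - 1) \<in> S" "xs ! (j - 1) \<in> S" using xs(2) nth_mem by blast+
      ultimately show ?thesis using True l(2) by (simp add: uip_rel_iff card sl flip: xs_def)
    qed (auto simp: uip_rel_iff card)
  qed
  moreover have "S' \<inter> shift1 S' = {}" using l(3) unfolding S'_def shift1_def by fastforce
  ultimately show ?thesis using that assms card unfolding S'_def by blast
qed

section \<open>Every Dyck path comes from a starting set\<close>

definition realizes :: "nat list \<Rightarrow> real list \<Rightarrow> bool" where
  "realizes cs xs \<longleftrightarrow> sorted_wrt (<) xs \<and>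
     (\<forall>i<length xs. \<forall>j<length xs. (xs ! i + 1 < xs ! j \<longleftrightarrow> i < cs ! j) \<and> xs ! i + 1 \<noteq> xs ! j)"

lemma finite_sets_separated:
  fixes A B :: "real set"
  assumes "finite A" "finite B" "\<forall>a\<in>A. \<forall>b\<in>B. a < b"
  obtains z where "\<forall>a\<in>A. a < z" "\<forall>b\<in>B. z < b"
proof -
  have gap: "Max A < Min B" if "A \<noteq> {}" "B \<noteq> {}" using assms that by simp
  define z where "z = (if A = {} then (if B = {} then 0 else Min B - 1)
    else if B = {} then Max A + 1 else (Max A + Min B) / 2)"
  have "a < z" if "a \<in> A" for a
  proof -
    have "a \<le> Max A" "A \<noteq> {}" using Max_ge[OF assms(1) that] that by auto
    then show ?thesis using gap unfolding z_def by (cases "B = {}") auto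
  qed
  moreover have "z < b" if "b \<in> B" for b
  proof -
    have "Min B \<le> b" "B \<noteq> {}" using Min_le[OF assms(2) that] that by auto
    then show ?thesis using gap unfolding z_def by (cases "A = {}") auto
  qed
  ultimately show ?thesis using that by blast
qed

lemma realizes_snoc_iff_bounds:
  assumes xs: "realizes cs xs" "length xs = m" and c: "cs ! m \<le> m"
    and above: "\<forall>i<m. xs ! i < z"
  shows "realizes cs (xs @ [z]) \<longleftrightarrow> (\<forall>i<m. xs ! i + 1 < z \<longleftrightarrow> i < cs ! m) \<and> (\<forall>i<m. xs ! i + 1 \<noteq> z)"
proof -
  note rel = xs(1)[unfolded realizes_def, THEN conjunct2, rule_format]
  have sorted: "sorted_wrt (<) (xs @ [z])"
    using xs above by (auto simp: realizes_def sorted_wrt_append in_set_conv_nth)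
  have new_row: "\<forall>j<m. (z + 1 < xs ! j \<longleftrightarrow> m < cs ! j) \<and> z + 1 \<noteq> xs ! j"
  proof (intro allI impI)
    fix j assume j: "j < m"
    then have "\<not> m < cs ! j" using rel[of j j] xs(2) by auto
    moreover have "xs ! j < z" using above j by blast
    ultimately show "(z + 1 < xs ! j \<longleftrightarrow> m < cs ! j) \<and> z + 1 \<noteq> xs ! j" by auto
  qed
  have "(\<forall>i<Suc m. \<forall>j<Suc m. ((xs @ [z]) ! i + 1 < (xs @ [z]) ! j \<longleftrightarrow> i < cs ! j)
      \<and> (xs @ [z]) ! i + 1 \<noteq> (xs @ [z]) ! j)
    \<longleftrightarrow> (\<forall>i<m. \<forall>j<m. (xs ! i + 1 < xs ! j \<longleftrightarrow> i < cs ! j) \<and> xs ! i + 1 \<noteq> xs ! j)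
      \<and> (\<forall>i<m. (xs ! i + 1 < z \<longleftrightarrow> i < cs ! m) \<and> xs ! i + 1 \<noteq> z)
      \<and> (\<forall>j<m. (z + 1 < xs ! j \<longleftrightarrow> m < cs ! j) \<and> z + 1 \<noteq> xs ! j)
      \<and> (z + 1 < z \<longleftrightarrow> m < cs ! m) \<and> z + 1 \<noteq> z"
    using xs(2) by (simp add: All_less_Suc nth_append) blast
  then show ?thesis using sorted rel new_row c xs(2) unfolding realizes_def by auto
qed

text \<open>The new point has to lie above all points, more than one unit above the first
  cs ! m of them and less than one unit above the others; these constraints are
  consistent because cs is weakly increasing.\<close>
lemma realizes_snoc:
  assumes xs: "realizes cs xs" "length xs = m" and c: "cs ! m \<le> m"
    and mono: "\<forall>a<m. cs ! a \<le> cs ! m"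
  obtains z where "realizes cs (xs @ [z])"
proof -
  define c where "c = cs ! m"
  note rel = xs(1)[unfolded realizes_def, THEN conjunct2, rule_format]
  have sorted: "sorted_wrt (<) xs" using xs unfolding realizes_def by blast
  define A where "A = (!) xs ` {..<m} \<union> (\<lambda>i. xs ! i + 1) ` {..<c}"
  define B where "B = (\<lambda>i. xs ! i + 1) ` {c..<m}"
  have "xs ! i < xs ! k + 1" if "i < m" "c \<le> k" "k < m" for i k
  proof (cases "i \<le> k")
    case True
    then show ?thesis using sorted_wrt_nth_less[OF sorted, of i k] that xs(2) by (cases "i = k") auto
  next
    case False
    then have "\<not> xs ! k + 1 < xs ! i" "xs ! k + 1 \<noteq> xs ! i"
      using rel[of k i] mono that xs(2) c_def by auto
    then show ?thesis by simp
  qed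
  moreover have "xs ! i + 1 < xs ! k + 1" if "i < c" "c \<le> k" "k < m" for i k
    using sorted_wrt_nth_less[OF sorted, of i k] that xs(2) by simp
  ultimately have "\<forall>a\<in>A. \<forall>b\<in>B. a < b" unfolding A_def B_def by auto
  moreover have "finite A" "finite B" unfolding A_def B_def by simp_all
  ultimately obtain z where zA: "\<forall>a\<in>A. a < z" and zB: "\<forall>b\<in>B. z < b"
    using finite_sets_separated by metis
  have "\<forall>i<m. xs ! i < z" "\<forall>i<c. xs ! i + 1 < z" using zA by (auto simp: A_def)
  moreover have "\<forall>i. c \<le> i \<and> i < m \<longrightarrow> z < xs ! i + 1" using zB by (auto simp: B_def)
  ultimately have "realizes cs (xs @ [z])"
    using realizes_snoc_iff_bounds[OF xs c] unfolding c_def by (metis not_less order.asym)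
  then show ?thesis by (rule that)
qed

lemma exists_realizing_list:
  assumes "sorted cs" "\<forall>j<n. cs ! j \<le> j" "length cs = n"
  shows "m \<le> n \<Longrightarrow> \<exists>xs. length xs = m \<and> realizes cs xs"
proof (induction m)
  case 0
  then show ?case by (simp add: realizes_def)
next
  case (Suc m)
  then obtain xs where xs: "length xs = m" "realizes cs xs" by auto
  moreover have "\<forall>a<m. cs ! a \<le> cs ! m" using assms(1,3) Suc.prems by (simp add: sorted_nth_mono)
  ultimately obtain z where "realizes cs (xs @ [z])"
    using realizes_snoc assms(2) Suc.prems by (metis Suc_le_lessD)
  then show ?case using xs(1) by (intro exI[of _ "xs @ [z]"]) simp
qed

lemma realizes_pred_counts:
  assumes xs: "realizes cs xs" "length xs = n"
    and cs: "length cs = n" "\<forall>j<n. cs ! j \<le> j"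
  shows "finite (set xs)" "card (set xs) = n" "set xs \<inter> shift1 (set xs) = {}"
    "pred_counts (set xs) = cs"
proof -
  have sorted: "sorted_wrt (<) xs" and rel: "\<And>i j. \<lbrakk>i < n; j < n\<rbrakk> \<Longrightarrow>
      (xs ! i + 1 < xs ! j \<longleftrightarrow> i < cs ! j) \<and> xs ! i + 1 \<noteq> xs ! j"
    using xs unfolding realizes_def by auto
  have sl: "sorted_list_of_set (set xs) = xs" by (rule sorted_list_of_set_set_strict_sorted[OF sorted])
  show "finite (set xs)" by simp
  show card: "card (set xs) = n" using sorted xs(2) by (simp add: distinct_card strict_sorted_iff)
  have "a + 1 \<noteq> b" if "a \<in> set xs" "b \<in> set xs" for a b
    using that rel xs(2) by (metis in_set_conv_nth)
  then show "set xs \<inter> shift1 (set xs) = {}" unfolding shift1_def by auto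
  show "pred_counts (set xs) = cs"
  proof (rule nth_equalityI)
    fix j assume "j < length (pred_counts (set xs))"
    then have j: "j < n" using card by (simp add: length_pred_counts)
    have same: "i < pred_counts (set xs) ! j \<longleftrightarrow> i < cs ! j" if "i < n" for i
      using sorted_list_of_set_nth_plus_one_less_iff[of "set xs" i j] rel[OF that j] card that j sl
      by simp
    have "pred_counts (set xs) ! j < n" "cs ! j < n"
      using pred_counts_nth_le[of "set xs" j] cs(2) card j by auto
    then show "pred_counts (set xs) ! j = cs ! j"
      using same[of "pred_counts (set xs) ! j"] same[of "cs ! j"] by linarith
  qed (use card cs(1) in \<open>simp add: length_pred_counts\<close>)
qed

lemma count_True_plus_count_False: "count_list w True + count_list w False = length w"
  by (induction w) auto

lemma Dyck_columns_of_word: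
  assumes "w \<in> Dyck n"
  defines "cs \<equiv> columns_of_word 0 w"
  shows "word_of_columns 0 cs n = w" "sorted cs" "length cs = n" "\<forall>j<n. cs ! j \<le> j"
proof -
  have w: "count_list w True = n" "count_list w False = n"
    "\<forall>k\<le>length w. count_list (take k w) False \<le> count_list (take k w) True"
    using assms count_True_plus_count_False[of w] unfolding Dyck_def by auto
  show "word_of_columns 0 cs n = w" using word_of_columns_of_word[of 0 w] w(2) cs_def by simp
  show "sorted cs" unfolding cs_def by (rule sorted_columns_of_word)
  show "length cs = n" using length_columns_of_word w(1) cs_def by simp
  have "0 + count_list (take m w) False \<le> 0 + count_list (take m w) True" for m
    using w(3)[rule_format, of "min m (length w)"] by (cases "m \<le> length w") auto
  then show "\<forall>j<n. cs ! j \<le> j"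
    using columns_of_word_ballot[of 0 w 0] length_columns_of_word w(1) cs_def by auto
qed

lemma word_of_columns_in_Dyck:
  assumes "sorted cs" "length cs = n" "\<forall>j<n. cs ! j \<le> j"
  shows "word_of_columns 0 cs n \<in> Dyck n"
proof -
  have "\<forall>c\<in>set cs. c \<le> n"
    using assms(2,3) by (auto simp: in_set_conv_nth) (metis le_trans less_imp_le)
  then show ?thesis
    using assms length_word_of_columns[of 0 cs n] count_True_word_of_columns[of 0 cs n]
      word_of_columns_ballot[of 0 cs 0 n]
    unfolding Dyck_def by simp
qed

lemma Dyck_eq_dyck_of_set:
  assumes "w \<in> Dyck n"
  obtains S where "finite S" "card S = n" "S \<inter> shift1 S = {}" "dyck_of_set S = w"
proof -
  note cs = Dyck_columns_of_word[OF assms]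
  obtain xs where xs: "length xs = n" "realizes (columns_of_word 0 w) xs"
    using exists_realizing_list[OF cs(2,4,3)] by blast
  note S = realizes_pred_counts[OF xs(2,1) cs(3,4)]
  have "dyck_of_set (set xs) = w"
    using dyck_of_set_eq_word_of_columns[OF S(1,3)] S(2,4) cs(1,3) by simp
  then show ?thesis using that S(1-3) by blast
qed

lemma dyck_of_set_in_Dyck:
  assumes "finite S" "card S = n" "S \<inter> shift1 S = {}"
  shows "dyck_of_set S \<in> Dyck n"
proof -
  have "word_of_columns 0 (pred_counts S) n \<in> Dyck n"
    using assms by (intro word_of_columns_in_Dyck sorted_pred_counts allI impI pred_counts_nth_le)
      (simp_all add: length_pred_counts)
  then show ?thesis using dyck_of_set_eq_word_of_columns assms by simp
qed

definition numbered_children :: "ptree list \<Rightarrow> (nat \<times> ptree) list" where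
  "numbered_children ts = zip [1..<Suc (length ts)] (rev ts)"

definition next_level :: "(nat list \<times> ptree) list \<Rightarrow> (nat list \<times> ptree) list" where
  "next_level P = concat (map (\<lambda>(p, t). map (\<lambda>(i, c). (p @ [i], c)) (numbered_children (children t))) P)"

primrec coded_level :: "ptree \<Rightarrow> nat \<Rightarrow> (nat list \<times> ptree) list" where
  "coded_level T 0 = [([], T)]"
| "coded_level T (Suc d) = next_level (coded_level T d)"

lemma map_fst_numbered_children: "map fst (numbered_children ts) = [1..<Suc (length ts)]"
  by (simp add: numbered_children_def del: upt_Suc)

lemma map_snd_numbered_children: "map snd (numbered_children ts) = rev ts"
  by (simp add: numbered_children_def del: upt_Suc)

lemma next_level_append: "next_level (P @ Q) = next_level P @ next_level Q"
  by (simp add: next_level_def)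

lemma next_level_concat: "next_level (concat Ps) = concat (map next_level Ps)"
  by (induction Ps) (auto simp: next_level_append next_level_def)

lemma next_level_map_Cons:
  "next_level (map (\<lambda>(p, t). (i # p, t)) P) = map (\<lambda>(p, t). (i # p, t)) (next_level P)"
  by (induction P) (auto simp: next_level_def)

lemma map_snd_next_level: "map snd (next_level P) = concat (map (\<lambda>t. rev (children t)) (map snd P))"
proof -
  have "map snd (map (\<lambda>(i, c). (p @ [i], c)) z) = map snd z" for p and z :: "(nat \<times> ptree) list"
    by (induction z) auto
  then have "map snd (case x of (p, t) \<Rightarrow> map (\<lambda>(i, c). (p @ [i], c)) (numbered_children (children t)))
      = rev (children (snd x))" for x
    by (cases x) (simp only: prod.case snd_conv map_snd_numbered_children)
  then show ?thesis unfolding next_level_def map_concat map_map comp_def by simp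
qed

lemma map_snd_coded_level: "map snd (coded_level T d) = level T d"
  by (induction d) (simp_all add: level_def map_snd_next_level)

lemma coded_level_Node_Suc:
  "coded_level (Node ts) (Suc d) = concat (map (\<lambda>(i, c). map (\<lambda>(p, t). (i # p, t)) (coded_level c d)) (numbered_children ts))"
proof (induction d)
  case 0
  show ?case by (simp add: next_level_def case_prod_beta comp_def)
next
  case (Suc d)
  have "coded_level (Node ts) (Suc (Suc d)) = next_level (coded_level (Node ts) (Suc d))" by simp
  also have "\<dots> = concat (map (\<lambda>(i, c). next_level (map (\<lambda>(p, t). (i # p, t)) (coded_level c d))) (numbered_children ts))"
    unfolding Suc next_level_concat map_map by (intro arg_cong[where f=concat] map_cong) auto
  also have "\<dots> = concat (map (\<lambda>(i, c). map (\<lambda>(p, t). (i # p, t)) (coded_level c (Suc d))) (numbered_children ts))"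
    by (simp add: next_level_map_Cons)
  finally show ?case .
qed

lemma mem_numbered_children: "(i, c) \<in> set (numbered_children ts) \<Longrightarrow> c \<in> set ts \<and> 1 \<le> i \<and> i \<le> length ts"
  unfolding numbered_children_def by (auto simp: in_set_zip simp del: upt_Suc dest: set_zip_rightD)
    (metis length_rev nth_mem set_rev)

lemma numbered_children_Cons: "numbered_children (t # ts) = numbered_children ts @ [(Suc (length ts), t)]"
  unfolding numbered_children_def by (simp del: upt_Suc add: upt_Suc_append zip_append)

lemma set_node_codes_list:
  "set (node_codes_list ts) = (\<Union>(i, c)\<in>set (numbered_children ts). insert [i] ((#) i ` set (node_codes c)))"
proof (induction ts)
  case Nil then show ?case by (simp add: numbered_children_def)
next
  case (Cons t ts)
  show ?case unfolding numbered_children_Cons using Cons by (auto simp: Let_def)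
qed

lemma UN_nat_split_0: "(\<Union>d. A d) = A 0 \<union> (\<Union>d. A (Suc d))"
  by (auto simp: not0_implies_Suc) (metis not0_implies_Suc)

lemma set_node_codes_coded_level:
  "set (node_codes T) = (\<Union>d. fst ` set (coded_level T (Suc d)))"
proof (induction T)
  case (Node ts)
  have "(\<Union>d. fst ` set (coded_level (Node ts) (Suc d)))
      = (\<Union>(i, c)\<in>set (numbered_children ts). (#) i ` (\<Union>d. fst ` set (coded_level c d)))"
    unfolding coded_level_Node_Suc by (force simp: image_iff)
  also have "\<dots> = (\<Union>(i, c)\<in>set (numbered_children ts). insert [i] ((#) i ` set (node_codes c)))"
  proof (intro SUP_cong refl, clarify)
    fix i c assume "(i, c) \<in> set (numbered_children ts)"
    then have "c \<in> set ts" using mem_numbered_children by blast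
    then show "(#) i ` (\<Union>d. fst ` set (coded_level c d)) = insert [i] ((#) i ` set (node_codes c))"
      using Node UN_nat_split_0[of "\<lambda>d. fst ` set (coded_level c d)"] by simp
  qed
  finally show ?case by (simp add: set_node_codes_list)
qed

lemma coded_level_nonempty_depth_le: "coded_level T d \<noteq> [] \<Longrightarrow> d \<le> num_nodes T"
proof (induction T arbitrary: d)
  case (Node ts)
  show ?case
  proof (cases d)
    case 0 then show ?thesis by simp
  next
    case (Suc d')
    from Node.prems have "coded_level (Node ts) (Suc d') \<noteq> []" unfolding Suc .
    then have "concat (map (\<lambda>(i, c). map (\<lambda>(p, t). (i # p, t)) (coded_level c d')) (numbered_children ts)) \<noteq> []"
      unfolding coded_level_Node_Suc .
    then obtain i c where ic: "(i, c) \<in> set (numbered_children ts)" "coded_level c d' \<noteq> []"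
      by (auto simp: concat_eq_Nil_conv)
    then have c: "c \<in> set ts" using mem_numbered_children by blast
    have "d' \<le> num_nodes c" using Node.IH[OF c ic(2)] .
    moreover have "Suc (num_nodes c) \<le> (\<Sum>t\<leftarrow>ts. Suc (num_nodes t))"
      by (rule member_le_sum_list) (use c in auto)
    ultimately show ?thesis using Suc by simp
  qed
qed

lemma max_children_Node: "max_children (Node ts) = Max (insert (length ts) (max_children ` set ts))"
  by (simp add: Max.set_eq_fold[symmetric])

lemma length_le_max_children: "length ts \<le> max_children (Node ts)"
  unfolding max_children_Node by simp

lemma max_children_child_le: "c \<in> set ts \<Longrightarrow> max_children c \<le> max_children (Node ts)"
  unfolding max_children_Node by (auto intro!: Max_ge)

lemma length_children_coded_level_le: "(p, t) \<in> set (coded_level T d) \<Longrightarrow> length (children t) \<le> max_children T"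
proof (induction T arbitrary: d p t)
  case (Node ts)
  show ?case
  proof (cases d)
    case 0 then show ?thesis using Node.prems length_le_max_children by auto
  next
    case (Suc d')
    from Node.prems have "(p, t) \<in> set (coded_level (Node ts) (Suc d'))" unfolding Suc .
    then have "(p, t) \<in> set (concat (map (\<lambda>(i, c). map (\<lambda>(p, t). (i # p, t)) (coded_level c d')) (numbered_children ts)))"
      unfolding coded_level_Node_Suc .
    then obtain i c p' where ic: "(i, c) \<in> set (numbered_children ts)" "(p', t) \<in> set (coded_level c d')"
      by auto
    then have c: "c \<in> set ts" using mem_numbered_children by blast
    show ?thesis using Node.IH[OF c ic(2)] max_children_child_le[OF c] by simp
  qed
qed

lemma coded_level_code:
  "(p, t) \<in> set (coded_level T d) \<Longrightarrow> length p = d \<and> (\<forall>c\<in>set p. 1 \<le> c \<and> c \<le> max_children T)"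
proof (induction d arbitrary: p t)
  case 0 then show ?case by simp
next
  case (Suc d)
  then obtain q s i where qs: "(q, s) \<in> set (coded_level T d)"
    "(i, t) \<in> set (numbered_children (children s))" "p = q @ [i]"
    by (auto simp: next_level_def)
  then have "1 \<le> i" "i \<le> length (children s)" using mem_numbered_children by blast+
  moreover have "length (children s) \<le> max_children T" using length_children_coded_level_le[OF qs(1)] .
  ultimately show ?case using Suc.IH[OF qs(1)] qs(3) by auto
qed

lemma length_distinct_node_codes_list:
  assumes "\<And>t. t \<in> set ts \<Longrightarrow> length (node_codes t) = num_nodes t \<and> distinct (node_codes t)"
  shows "length (node_codes_list ts) = (\<Sum>t\<leftarrow>ts. Suc (num_nodes t)) \<and> distinct (node_codes_list ts)"
  using assms
proof (induction ts)
  case Nil then show ?case by simp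
next
  case (Cons t ts)
  have IH: "length (node_codes_list ts) = (\<Sum>t\<leftarrow>ts. Suc (num_nodes t)) \<and> distinct (node_codes_list ts)"
    using Cons by simp
  have t: "length (node_codes t) = num_nodes t" "distinct (node_codes t)" using Cons.prems by auto
  have ne: "[] \<notin> set (node_codes t)"
    by (cases t) (auto simp: set_node_codes_list)
  have hd: "\<And>q. q \<in> set (node_codes_list ts) \<Longrightarrow> q \<noteq> [] \<and> hd q \<le> length ts"
    using mem_numbered_children by (fastforce simp: set_node_codes_list)
  define c where "c = Suc (length ts)"
  have "node_codes_list (t # ts) = ([c] # map ((#) c) (node_codes t)) @ node_codes_list ts"
    by (simp add: c_def Let_def)
  moreover have "distinct ([c] # map ((#) c) (node_codes t))"
    using t(2) ne by (auto simp: distinct_map)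
  moreover have "set ([c] # map ((#) c) (node_codes t)) \<inter> set (node_codes_list ts) = {}"
    using hd c_def by fastforce
  ultimately show ?case using IH t(1) by simp
qed

lemma length_distinct_node_codes: "length (node_codes T) = num_nodes T \<and> distinct (node_codes T)"
proof (induction T)
  case (Node ts)
  then show ?case using length_distinct_node_codes_list[of ts] by simp
qed

section \<open>Node values\<close>

definition code_num :: "nat \<Rightarrow> nat list \<Rightarrow> nat" where
  "code_num b cs = foldl (\<lambda>a c. b * a + c) 0 cs"

lemma code_num_Nil [simp]: "code_num b [] = 0"
  by (simp add: code_num_def)

lemma code_num_snoc [simp]: "code_num b (cs @ [c]) = b * code_num b cs + c"
  by (simp add: code_num_def)

lemma code_num_less: "\<forall>c\<in>set cs. c < b \<Longrightarrow> code_num b cs < b ^ length cs"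
proof (induction cs rule: rev_induct)
  case (snoc c cs)
  then have "b * code_num b cs + c < b * (code_num b cs + 1)" by simp
  also have "\<dots> \<le> b * b ^ length cs" using snoc by (intro mult_le_mono2) simp
  finally show ?case by simp
qed simp

lemma code_num_pos: "\<lbrakk>cs \<noteq> []; \<forall>c\<in>set cs. 1 \<le> c\<rbrakk> \<Longrightarrow> 0 < code_num b cs"
  by (induction cs rule: rev_induct) auto

lemma sum_digits_eq_code_num:
  assumes "0 < b"
  shows "(\<Sum>i=1..length cs. real (cs ! (i - 1)) * real b powi (- int i))
     = real (code_num b cs) / real b ^ length cs"
proof (induction cs rule: rev_induct)
  case (snoc c cs)
  have "(\<Sum>i=1..length cs. real ((cs @ [c]) ! (i - 1)) * real b powi (- int i))
      = (\<Sum>i=1..length cs. real (cs ! (i - 1)) * real b powi (- int i))"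
    by (intro sum.cong) (auto simp: nth_append)
  then have "(\<Sum>i=1..length (cs @ [c]). real ((cs @ [c]) ! (i - 1)) * real b powi (- int i))
      = (\<Sum>i=1..length cs. real (cs ! (i - 1)) * real b powi (- int i))
        + real c / real b ^ Suc (length cs)"
    by (simp add: power_int_minus power_int_of_nat divide_inverse)
  also have "\<dots> = real (code_num b (cs @ [c])) / real b ^ length (cs @ [c])"
    using snoc assms by (simp add: field_simps)
  finally show ?case .
qed simp

definition level_point :: "nat \<Rightarrow> nat \<Rightarrow> nat \<Rightarrow> real" where
  "level_point b d k = real d + real k / real b ^ d"

lemma node_value_eq_level_point:
  "node_value m cs = level_point (m + 2) (length cs) (code_num (m + 2) cs)"
  using sum_digits_eq_code_num[of "m + 2" cs]
  by (simp add: node_value_def level_point_def add.commute)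

lemma strict_mono_level_point: "0 < b \<Longrightarrow> strict_mono (level_point b d)"
  by (auto simp: strict_mono_def level_point_def divide_strict_right_mono)

lemma level_point_Suc_mult: "0 < b \<Longrightarrow> level_point b (Suc d) (b * k) = level_point b d k + 1"
  by (simp add: level_point_def)

lemma level_point_bounds:
  assumes "0 < k" "k < b ^ d"
  shows "real d < level_point b d k" "level_point b d k < real d + 1"
proof -
  have "real k < real b ^ d" using assms(2) by (metis of_nat_less_iff of_nat_power)
  moreover have "0 < real b ^ d" using assms by (metis of_nat_0_less_iff of_nat_power order.strict_trans)
  ultimately show "real d < level_point b d k" "level_point b d k < real d + 1"
    using assms(1) by (simp_all add: level_point_def)
qed

definition tree_base :: "ptree \<Rightarrow> nat" where
  "tree_base T = max_children T + 2"

lemma tree_base_pos: "0 < tree_base T"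
  by (simp add: tree_base_def)

lemma node_value_tree_base:
  "node_value (max_children T) p = level_point (tree_base T) (length p) (code_num (tree_base T) p)"
  by (simp add: tree_base_def node_value_eq_level_point)

definition level_values :: "ptree \<Rightarrow> nat \<Rightarrow> real list" where
  "level_values T d = (if d = 0 then [] else map (node_value (max_children T) \<circ> fst) (coded_level T d))"

definition level_blocks :: "ptree \<Rightarrow> nat \<Rightarrow> (nat \<times> nat) list" where
  "level_blocks T d = map (\<lambda>(p, t). (code_num (tree_base T) p, length (children t))) (coded_level T d)"

lemma level_values_eq_level_points:
  "d \<noteq> 0 \<Longrightarrow> level_values T d = map (level_point (tree_base T) d \<circ> fst) (level_blocks T d)"
  unfolding level_values_def level_blocks_def
  by (auto simp: node_value_tree_base dest: coded_level_code intro!: map_cong)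

lemma map_fst_next_level:
  "map (f \<circ> fst) (next_level P)
     = concat (map (\<lambda>x. map (\<lambda>i. f (fst x @ [i])) [1..<Suc (length (children (snd x)))]) P)"
proof -
  have "map (f \<circ> fst) (map (\<lambda>(i, c). (p @ [i], c)) z) = map (\<lambda>i. f (p @ [i])) (map fst z)"
    for p and z :: "(nat \<times> ptree) list"
    by (induction z) auto
  then have "map (f \<circ> fst) (case x of (p, t) \<Rightarrow> map (\<lambda>(i, c). (p @ [i], c)) (numbered_children (children t)))
      = map (\<lambda>i. f (fst x @ [i])) [1..<Suc (length (children (snd x)))]" for x
    by (cases x) (simp only: prod.case fst_conv snd_conv map_fst_numbered_children)
  then show ?thesis unfolding next_level_def map_concat map_map comp_def[of "map (f \<circ> fst)"] by simp
qed

lemma code_nums_coded_level_Suc: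
  "map (code_num (tree_base T) \<circ> fst) (coded_level T (Suc d))
     = concat (map (\<lambda>(a, e). map (\<lambda>i. tree_base T * a + i) [1..<Suc e]) (level_blocks T d))"
  unfolding coded_level.simps map_fst_next_level
  by (simp add: level_blocks_def case_prod_beta comp_def del: upt_Suc)

lemma block_end_less:
  fixes a a' e b :: nat
  assumes "a < a'" "e < b"
  shows "b * a + e < b * a'"
proof -
  have "b * a + e < b * Suc a" using assms(2) by simp
  also have "\<dots> \<le> b * a'" using assms(1) by (intro mult_le_mono2) simp
  finally show ?thesis .
qed

lemma sorted_blocks:
  assumes "sorted_wrt (<) (map fst Q)" "\<forall>(a, e)\<in>set Q. e < b"
  shows "sorted_wrt (<) (concat (map (\<lambda>(a, e). map (\<lambda>i. b * a + i) [1..<Suc e]) Q))"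
  using assms
proof (induction Q)
  case (Cons ae Q)
  obtain a e where ae: "ae = (a, e)" by (cases ae)
  have "u < v" if u: "u \<in> set (map (\<lambda>i. b * a + i) [1..<Suc e])"
    and v: "v \<in> set (concat (map (\<lambda>(a, e). map (\<lambda>i. b * a + i) [1..<Suc e]) Q))" for u v
  proof -
    obtain a' e' where ae': "(a', e') \<in> set Q" "v \<in> set (map (\<lambda>i. b * a' + i) [1..<Suc e'])"
      using v by auto
    have "a < a'" using Cons.prems(1) ae ae'(1) by force
    moreover have "e < b" using Cons.prems(2) ae by simp
    moreover have "u \<le> b * a + e" "b * a' < v" using u ae'(2) by auto
    ultimately show ?thesis using block_end_less[of a a' e b] by linarith
  qed
  moreover have "sorted_wrt (<) (map (\<lambda>i. b * a + i) [1..<Suc e])"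
    unfolding sorted_wrt_map by (rule sorted_wrt_mono_rel[OF _ sorted_wrt_upt]) simp
  moreover have "sorted_wrt (<) (concat (map (\<lambda>(a, e). map (\<lambda>i. b * a + i) [1..<Suc e]) Q))"
    using Cons.IH Cons.prems by simp
  ultimately show ?case
    unfolding ae by (simp only: list.map concat.simps prod.case sorted_wrt_append) blast
qed simp

lemma sorted_code_nums_coded_level:
  "sorted_wrt (<) (map (code_num (tree_base T) \<circ> fst) (coded_level T d))"
proof (induction d)
  case (Suc d)
  have "\<forall>(a, e)\<in>set (level_blocks T d). e < tree_base T"
    using length_children_coded_level_le by (fastforce simp: level_blocks_def tree_base_def)
  moreover have "map fst (level_blocks T d) = map (code_num (tree_base T) \<circ> fst) (coded_level T d)"
    by (simp add: level_blocks_def case_prod_beta comp_def)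
  ultimately show ?case
    unfolding code_nums_coded_level_Suc using Suc by (intro sorted_blocks) (simp_all add: comp_def)
qed simp

lemma sorted_level_blocks: "sorted_wrt (<) (map fst (level_blocks T d))"
  using sorted_code_nums_coded_level[of T d] by (simp add: level_blocks_def case_prod_beta comp_def)

lemma level_blocks_children_less: "(a, e) \<in> set (level_blocks T d) \<Longrightarrow> e < tree_base T"
  using length_children_coded_level_le by (fastforce simp: level_blocks_def tree_base_def)

lemma sorted_level_values: "sorted_wrt (<) (level_values T d)"
proof (cases "d = 0")
  case False
  show ?thesis
    using sorted_level_blocks[of T d]
    using strict_mono_level_point[OF tree_base_pos[of T], of d] False
    by (simp add: level_values_eq_level_points sorted_wrt_map strict_mono_less)
qed (simp add: level_values_def)

lemma level_values_bounds: "x \<in> set (level_values T d) \<Longrightarrow> real d < x \<and> x < real d + 1"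
proof (cases "d = 0")
  case False
  assume "x \<in> set (level_values T d)"
  then obtain p t where pt: "(p, t) \<in> set (coded_level T d)"
    "x = level_point (tree_base T) d (code_num (tree_base T) p)"
    using False by (auto simp: level_values_eq_level_points level_blocks_def)
  note code = coded_level_code[OF pt(1)]
  have "0 < code_num (tree_base T) p" using code False by (intro code_num_pos) auto
  moreover have "code_num (tree_base T) p < tree_base T ^ d"
    using code code_num_less[of p "tree_base T"] by (fastforce simp: tree_base_def)
  ultimately show ?thesis using pt(2) level_point_bounds by blast
qed (simp add: level_values_def)

lemma level_values_Suc_eq_level_points:
  "level_values T (Suc d) = concat (map (\<lambda>(a, e).
     map (\<lambda>i. level_point (tree_base T) (Suc d) (tree_base T * a + i)) [1..<Suc e]) (level_blocks T d))"
  using arg_cong[OF code_nums_coded_level_Suc[of T d], of "map (level_point (tree_base T) (Suc d))"]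
  by (simp add: level_values_eq_level_points map_concat case_prod_beta comp_def
      level_blocks_def del: upt_Suc)

lemma shifted_level_values_eq_level_points:
  "d \<noteq> 0 \<Longrightarrow> map (\<lambda>x. x + 1) (level_values T d)
     = map (\<lambda>(a, e). level_point (tree_base T) (Suc d) (tree_base T * a)) (level_blocks T d)"
  by (simp add: level_values_eq_level_points level_point_Suc_mult[OF tree_base_pos] case_prod_beta)

lemma merge_marks_blocks:
  fixes \<phi> :: "nat \<Rightarrow> real"
  assumes mono: "strict_mono \<phi>" and "sorted_wrt (<) (map fst Q)" "\<forall>(a, e)\<in>set Q. e < b"
  shows "merge_marks (concat (map (\<lambda>(a, e). map (\<lambda>i. \<phi> (b * a + i)) [1..<Suc e]) Q))
            (map (\<lambda>(a, e). \<phi> (b * a)) Q)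
       = concat (map (\<lambda>(a, e). False # replicate e True) Q)"
  using assms(2,3)
proof (induction Q)
  case (Cons ae Q)
  obtain a e where ae: "ae = (a, e)" by (cases ae)
  define C where "C = map (\<lambda>i. \<phi> (b * a + i)) [1..<Suc e]"
  define R where "R = concat (map (\<lambda>(a, e). map (\<lambda>i. \<phi> (b * a + i)) [1..<Suc e]) Q)"
  define Y where "Y = map (\<lambda>(a, e). \<phi> (b * a)) Q"
  have "u < v" if u: "u \<in> set C \<union> {\<phi> (b * a)}" and v: "v \<in> set R \<union> set Y" for u v
  proof -
    obtain k where k: "u = \<phi> k" "k \<le> b * a + e"
    proof (cases "u = \<phi> (b * a)")
      case False
      then obtain i where "i < Suc e" "u = \<phi> (b * a + i)"
        using u by (auto simp: C_def simp del: upt_Suc)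
      then show ?thesis using that[of "b * a + i"] by simp
    qed (use that[of "b * a"] in simp)
    obtain a' e' k' where k': "(a', e') \<in> set Q" "v = \<phi> k'" "b * a' \<le> k'"
      using v unfolding R_def Y_def by auto
    have "a < a'" using Cons.prems(1) ae k'(1) by force
    then have "k < k'" using block_end_less[of a a' e b] Cons.prems(2) ae k k'(3) by auto
    then show ?thesis using k(1) k'(2) mono by (simp add: strict_mono_less)
  qed
  then have "merge_marks (C @ R) ([\<phi> (b * a)] @ Y) = merge_marks C [\<phi> (b * a)] @ merge_marks R Y"
    by (intro merge_marks_append) auto
  moreover have "merge_marks C [\<phi> (b * a)] = False # replicate e True"
    using mono by (simp add: C_def merge_marks_singleton strict_mono_less map_replicate_const)
  moreover have "merge_marks R Y = concat (map (\<lambda>(a, e). False # replicate e True) Q)"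
    using Cons R_def Y_def by simp
  ultimately show ?case by (simp add: ae C_def R_def Y_def)
qed simp

text \<open>merge_steps t is the contribution of t to the merge of its level, shifted by 1, with the
  next level.\<close>
definition merge_steps :: "ptree \<Rightarrow> bool list" where
  "merge_steps t = False # replicate (length (children t)) True"

definition bounce_steps :: "ptree \<Rightarrow> bool list" where
  "bounce_steps t = replicate (length (children t)) True @ [False]"

text \<open>The shifted values of level d and the values of level d + 1 are the points of
  level d + 1 at the multiples of the base, and at the following numbers up to the
  number of children of the parent.\<close>
lemma merge_marks_consecutive_levels:
  assumes "d \<noteq> 0"
  shows "merge_marks (level_values T (Suc d)) (map (\<lambda>x. x + 1) (level_values T d))
     = concat (map merge_steps (level T d))"
proof -
  have "concat (map merge_steps (level T d))
      = concat (map (\<lambda>(a, e). False # replicate e True) (level_blocks T d))"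
    by (simp add: merge_steps_def level_blocks_def case_prod_beta comp_def
        flip: map_snd_coded_level)
  moreover have "\<forall>(a, e)\<in>set (level_blocks T d). e < tree_base T"
    using level_blocks_children_less by blast
  ultimately show ?thesis
    unfolding level_values_Suc_eq_level_points shifted_level_values_eq_level_points[OF assms]
    using merge_marks_blocks[OF strict_mono_level_point[OF tree_base_pos] sorted_level_blocks]
    by simp
qed

lemma mult_add_neq_mult:
  fixes b :: nat
  assumes "0 < i" "i < b"
  shows "b * a + i \<noteq> b * a'"
proof
  assume "b * a + i = b * a'"
  then have "(b * a + i) mod b = (b * a') mod b" by simp
  then show False using assms by simp
qed

lemma level_values_Suc_disjoint_shifted:
  assumes "d \<noteq> 0"
  shows "set (level_values T (Suc d)) \<inter> set (map (\<lambda>x. x + 1) (level_values T d)) = {}"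
proof (rule ccontr)
  assume "set (level_values T (Suc d)) \<inter> set (map (\<lambda>x. x + 1) (level_values T d)) \<noteq> {}"
  then obtain a e i a' e' where blocks: "(a, e) \<in> set (level_blocks T d)" "1 \<le> i" "i \<le> e"
    "(a', e') \<in> set (level_blocks T d)"
    and eq: "level_point (tree_base T) (Suc d) (tree_base T * a + i)
      = level_point (tree_base T) (Suc d) (tree_base T * a')"
    unfolding level_values_Suc_eq_level_points shifted_level_values_eq_level_points[OF assms]
    by (auto simp del: upt_Suc) (metis less_Suc_eq_le)
  have "tree_base T * a + i = tree_base T * a'"
    using eq strict_mono_eq[OF strict_mono_level_point[OF tree_base_pos[of T]]] by blast
  moreover have "i < tree_base T" using level_blocks_children_less[OF blocks(1)] blocks(3) by simp
  ultimately show False using mult_add_neq_mult blocks(2) by (metis less_eq_Suc_le One_nat_def)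
qed

lemma sorted_concat_unit_intervals:
  fixes A :: "nat \<Rightarrow> real list"
  assumes "sorted_wrt (<) ds" "\<And>d. d \<in> set ds \<Longrightarrow> sorted_wrt (<) (A d)"
    and "\<And>d x. \<lbrakk>d \<in> set ds; x \<in> set (A d)\<rbrakk> \<Longrightarrow> real d < x \<and> x < real d + 1"
  shows "sorted_wrt (<) (concat (map A ds))"
  using assms
proof (induction ds)
  case (Cons d ds)
  have "x < y" if x: "x \<in> set (A d)" and d': "d' \<in> set ds" "y \<in> set (A d')" for x y d'
  proof -
    have "Suc d \<le> d'" using Cons.prems(1) d'(1) by (simp add: Suc_le_eq)
    then have "real (Suc d) \<le> real d'" by (simp only: of_nat_le_iff)
    then have "real d + 1 \<le> real d'" by simp
    moreover have "x < real d + 1" "real d' < y" using Cons.prems(3) x d' by auto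
    ultimately show ?thesis by linarith
  qed
  then show ?case using Cons by (auto simp: sorted_wrt_append)
qed simp

lemma merge_marks_concat_unit_intervals:
  fixes A B :: "nat \<Rightarrow> real list"
  assumes "sorted_wrt (<) ds"
    and "\<And>d x. \<lbrakk>d \<in> set ds; x \<in> set (A d) \<union> set (B d)\<rbrakk> \<Longrightarrow> real d < x \<and> x < real d + 1"
  shows "merge_marks (concat (map A ds)) (concat (map B ds))
     = concat (map (\<lambda>d. merge_marks (A d) (B d)) ds)"
  using assms
proof (induction ds)
  case (Cons d ds)
  have "x < y" if x: "x \<in> set (A d) \<union> set (B d)"
    and y: "y \<in> set (concat (map A ds)) \<union> set (concat (map B ds))" for x y
  proof -
    obtain d' where d': "d' \<in> set ds" "y \<in> set (A d') \<union> set (B d')" using y by auto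
    have "Suc d \<le> d'" using Cons.prems(1) d'(1) by (simp add: Suc_le_eq)
    then have "real (Suc d) \<le> real d'" by (simp only: of_nat_le_iff)
    then have "real d + 1 \<le> real d'" by simp
    moreover have "x < real d + 1" "real d' < y" using Cons.prems(2) x d' by auto
    ultimately show ?thesis by linarith
  qed
  then have "merge_marks (A d @ concat (map A ds)) (B d @ concat (map B ds))
      = merge_marks (A d) (B d) @ merge_marks (concat (map A ds)) (concat (map B ds))"
    by (intro merge_marks_append) blast
  moreover have "sorted_wrt (<) ds" using Cons.prems(1) by simp
  ultimately show ?case using Cons.IH Cons.prems(2) by simp
qed simp

definition tree_values :: "ptree \<Rightarrow> real list" where
  "tree_values T = concat (map (level_values T) [1..<Suc (num_nodes T)])"

definition tree_codes :: "ptree \<Rightarrow> nat list list" where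
  "tree_codes T = concat (map (\<lambda>d. map fst (coded_level T d)) [1..<Suc (num_nodes T)])"

lemma level_values_beyond: "num_nodes T < d \<Longrightarrow> level_values T d = []"
  using coded_level_nonempty_depth_le[of T d] by (auto simp: level_values_def)

lemma sorted_tree_values: "sorted_wrt (<) (tree_values T)"
  unfolding tree_values_def
  by (intro sorted_concat_unit_intervals sorted_level_values level_values_bounds)
    (simp_all del: upt_Suc)

lemma tree_values_eq_map_node_value: "tree_values T = map (node_value (max_children T)) (tree_codes T)"
  unfolding tree_values_def tree_codes_def map_concat
  by (intro arg_cong[where f=concat] map_cong) (auto simp: level_values_def)

lemma set_tree_codes: "set (tree_codes T) = set (node_codes T)"
  unfolding set_node_codes_coded_level
proof (intro equalityI subsetI)
  fix p assume "p \<in> set (tree_codes T)"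
  then have "p \<in> (\<Union>d\<in>set [1..<Suc (num_nodes T)]. set (map fst (coded_level T d)))"
    by (simp only: tree_codes_def set_concat set_map image_image)
  then obtain d where d: "d \<in> set [1..<Suc (num_nodes T)]" "p \<in> set (map fst (coded_level T d))"
    by blast
  then have "0 < d" by (simp del: upt_Suc)
  then obtain d' where "d = Suc d'" using gr0_implies_Suc by blast
  then show "p \<in> (\<Union>d. fst ` set (coded_level T (Suc d)))" using d(2) by auto
next
  fix p assume "p \<in> (\<Union>d. fst ` set (coded_level T (Suc d)))"
  then obtain d where d: "p \<in> fst ` set (coded_level T (Suc d))" by blast
  then have "coded_level T (Suc d) \<noteq> []" by auto
  then have "Suc d \<le> num_nodes T" by (rule coded_level_nonempty_depth_le)
  then have "Suc d \<in> set [1..<Suc (num_nodes T)]" by (simp del: upt_Suc)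
  then show "p \<in> set (tree_codes T)"
    unfolding tree_codes_def set_concat set_map image_image using d by (rule UN_I)
qed

lemma set_tree_values: "set (tree_values T) = tree_set T"
  unfolding tree_set_def tree_values_eq_map_node_value by (simp add: set_tree_codes)

lemma finite_tree_set: "finite (tree_set T)"
  unfolding tree_set_def by simp

lemma length_tree_values: "length (tree_values T) = num_nodes T"
proof -
  have "distinct (tree_values T)" using sorted_tree_values strict_sorted_iff by blast
  then have "distinct (tree_codes T)" unfolding tree_values_eq_map_node_value by (simp add: distinct_map)
  then have "length (tree_codes T) = card (set (node_codes T))"
    by (simp only: distinct_card[symmetric] set_tree_codes)
  also have "\<dots> = num_nodes T" using length_distinct_node_codes[of T] by (simp add: distinct_card)
  finally show ?thesis by (simp add: tree_values_eq_map_node_value)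
qed

lemma card_tree_set: "card (tree_set T) = num_nodes T"
  using sorted_tree_values[of T] length_tree_values[of T]
  by (simp add: set_tree_values[symmetric] distinct_card strict_sorted_iff)

lemma tree_set_disjoint_shift: "tree_set T \<inter> shift1 (tree_set T) = {}"
proof -
  have False if "x \<in> set (level_values T d)" "x - 1 \<in> set (level_values T d')" for x d d'
  proof -
    have "real d' < x - 1" "x - 1 < real d' + 1" "real d < x" "x < real d + 1"
      using level_values_bounds that by blast+
    then have "d = Suc d'" by linarith
    moreover have "d' \<noteq> 0" using that(2) by (cases d') (auto simp: level_values_def)
    ultimately show False
      using level_values_Suc_disjoint_shifted[of d' T] that by force
  qed
  then show ?thesis
    unfolding set_tree_values[symmetric] shift1_def tree_values_def by fastforce
qed

section \<open>The bounce path of a tree\<close>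

lemma level_values_0 [simp]: "level_values T 0 = []"
  by (simp add: level_values_def)

lemma length_level_values_1: "length (level_values T 1) = length (children T)"
  by (simp add: level_values_def next_level_def numbered_children_def del: upt_Suc)

lemma length_level_values: "d \<noteq> 0 \<Longrightarrow> length (level_values T d) = length (level T d)"
  by (simp add: level_values_def flip: map_snd_coded_level)

lemma merge_marks_tree_values:
  assumes "1 \<le> num_nodes T"
  shows "merge_marks (tree_values T) (map (\<lambda>x. x + 1) (tree_values T))
     = replicate (length (children T)) True
       @ concat (map (\<lambda>d. concat (map merge_steps (level T d))) [1..<Suc (num_nodes T)])"
proof -
  define n where "n = num_nodes T"
  have range: "[1..<Suc (Suc n)] = 1 # map Suc [1..<Suc n]"
    by (simp add: upt_conv_Cons map_Suc_upt del: upt_Suc)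
  have "tree_values T = concat (map (level_values T) [1..<Suc (Suc n)])"
    using level_values_beyond[of T "Suc n"] by (simp add: tree_values_def n_def)
  moreover have "map (\<lambda>x. x + 1) (tree_values T)
      = concat (map (\<lambda>d. map (\<lambda>x. x + 1) (level_values T (d - 1))) [1..<Suc (Suc n)])"
    unfolding range by (simp add: tree_values_def n_def map_concat comp_def del: upt_Suc)
  moreover have "real d < x \<and> x < real d + 1"
    if "d \<in> set [1..<Suc (Suc n)]"
      "x \<in> set (level_values T d) \<union> set (map (\<lambda>x. x + 1) (level_values T (d - 1)))" for d x
    using that level_values_bounds[of x T d] level_values_bounds[of "x - 1" T "d - 1"]
    by (auto simp: of_nat_diff simp del: upt_Suc)
  ultimately have "merge_marks (tree_values T) (map (\<lambda>x. x + 1) (tree_values T))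
      = concat (map (\<lambda>d. merge_marks (level_values T d) (map (\<lambda>x. x + 1) (level_values T (d - 1))))
          [1..<Suc (Suc n)])"
    by (simp only: merge_marks_concat_unit_intervals sorted_wrt_upt)
  also have "\<dots> = replicate (length (children T)) True
      @ concat (map (\<lambda>d. concat (map merge_steps (level T d))) [1..<Suc n])"
  proof -
    have "map (\<lambda>d. merge_marks (level_values T d) (map (\<lambda>x. x + 1) (level_values T (d - 1))))
        [1..<Suc (Suc n)] = replicate (length (children T)) True
        # map (\<lambda>d. concat (map merge_steps (level T d))) [1..<Suc n]"
      unfolding range using length_level_values_1[of T]
      by (auto simp: merge_marks_consecutive_levels map_replicate_const simp del: upt_Suc
          intro!: map_cong)
    then show ?thesis by simp
  qed
  finally show ?thesis unfolding n_def .
qed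

lemma dyck_of_tree_set:
  "dyck_of_set (tree_set T) = merge_marks (tree_values T) (map (\<lambda>x. x + 1) (tree_values T))"
proof -
  have sorted: "sorted_wrt (<) (tree_values T)" "sorted_wrt (<) (map (\<lambda>x. x + 1) (tree_values T))"
    using sorted_tree_values by (simp_all add: sorted_wrt_map)
  have sets: "set (tree_values T) = tree_set T" "set (map (\<lambda>x. x + 1) (tree_values T)) = shift1 (tree_set T)"
    by (simp_all add: set_tree_values shift1_def)
  show ?thesis
    using merge_marks_sorted_list_of_set[OF sorted] tree_set_disjoint_shift
    unfolding dyck_of_set_def sets by simp
qed

lemma bfs_list_eq: "bfs_list T = T # concat (map (level T) [1..<Suc (num_nodes T)])"
  unfolding bfs_list_def by (simp add: upt_conv_Cons level_def del: upt_Suc)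

lemma length_bfs_list: "length (bfs_list T) = Suc (num_nodes T)"
proof -
  have "length (concat (map (level T) [1..<Suc (num_nodes T)])) = length (tree_values T)"
    unfolding tree_values_def length_concat map_map
    by (intro arg_cong[where f=sum_list] map_cong) (simp_all add: length_level_values del: upt_Suc)
  then show ?thesis by (simp add: bfs_list_eq length_tree_values del: upt_Suc)
qed

lemma bounce_steps_rotate:
  "False # concat (map bounce_steps ts) = concat (map merge_steps ts) @ [False]"
  by (induction ts) (auto simp: bounce_steps_def merge_steps_def)

lemma concat_map_concat:
  "concat (map f (concat (map g xs))) = concat (map (\<lambda>x. concat (map f (g x))) xs)"
  by (induction xs) auto

lemma concat_bounce_steps_bfs_list:
  assumes "1 \<le> num_nodes T"
  shows "concat (map bounce_steps (bfs_list T)) = dyck_of_set (tree_set T) @ [False]"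
proof -
  define rest where "rest = concat (map (level T) [1..<Suc (num_nodes T)])"
  have "concat (map bounce_steps (bfs_list T))
      = replicate (length (children T)) True @ False # concat (map bounce_steps rest)"
    by (simp add: bfs_list_eq bounce_steps_def rest_def del: upt_Suc)
  also have "False # concat (map bounce_steps rest) = concat (map merge_steps rest) @ [False]"
    by (rule bounce_steps_rotate)
  also have "concat (map merge_steps rest)
      = concat (map (\<lambda>d. concat (map merge_steps (level T d))) [1..<Suc (num_nodes T)])"
    unfolding rest_def by (rule concat_map_concat)
  finally show ?thesis
    by (simp add: merge_marks_tree_values[OF assms] dyck_of_tree_set del: upt_Suc)
qed

lemma last_sorted_list_of_set:
  assumes "finite A" "A \<noteq> {}"
  shows "last (sorted_list_of_set A) = Max (A :: 'a::linorder set)"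
proof -
  define L where "L = sorted_list_of_set A"
  have L: "sorted L" "set L = A" "L \<noteq> []" using assms by (auto simp: L_def)
  then have split: "L = butlast L @ [last L]" by simp
  then have "\<forall>x\<in>set (butlast L). x \<le> last L" using L(1) sorted_append[of "butlast L" "[last L]"] by simp
  moreover have "set L = insert (last L) (set (butlast L))" using split by (metis Un_insert_right empty_set list.set(2) set_append sup_bot_right)
  ultimately have "\<forall>x\<in>A. x \<le> last L" "last L \<in> A" using L(2) by auto
  then show ?thesis unfolding L_def[symmetric] using assms(1) by (intro Max_eqI[symmetric]) auto
qed

lemma last_dyck_of_set:
  assumes "finite S" "S \<noteq> {}" "S \<inter> shift1 S = {}"
  shows "dyck_of_set S \<noteq> [] \<and> last (dyck_of_set S) = False"
proof -
  define A where "A = S \<union> shift1 S"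
  have fA: "finite A" using assms(1) A_def shift1_def by simp
  have neA: "A \<noteq> {}" using assms(2) A_def by simp
  have MA: "Max A = Max S + 1"
  proof (rule Max_eqI[OF fA])
    fix y assume "y \<in> A"
    then have "y \<in> S \<or> (\<exists>s\<in>S. y = s + 1)" using A_def shift1_def by auto
    then show "y \<le> Max S + 1" using Max_ge[OF assms(1)] by force
  next
    show "Max S + 1 \<in> A" using assms(1,2) A_def shift1_def by auto
  qed
  have "Max S + 1 \<in> shift1 S" using Max_in[OF assms(1,2)] unfolding shift1_def by auto
  then have "Max S + 1 \<notin> S" using assms(3) by blast
  moreover have "sorted_list_of_set A \<noteq> []" using fA neA by simp
  ultimately show ?thesis unfolding dyck_of_set_def A_def[symmetric]
    using last_sorted_list_of_set[OF fA neA] MA by (simp add: last_map)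
qed

theorem Xi_bounce_eq_dyck_of_set:
  assumes "1 \<le> num_nodes T"
  shows "Xi_bounce T = dyck_of_set (tree_set T)"
proof -
  define n where "n = num_nodes T"
  define k where "k = length (children (bfs_list T ! n))"
  have "take (Suc n) (bfs_list T) = take n (bfs_list T) @ [bfs_list T ! n]"
    by (rule take_Suc_conv_app_nth) (simp add: length_bfs_list n_def)
  then have split: "take n (bfs_list T) @ [bfs_list T ! n] = bfs_list T"
    by (simp add: length_bfs_list n_def)
  have "concat (map bounce_steps (take n (bfs_list T) @ [bfs_list T ! n]))
      = Xi_bounce T @ replicate k True @ [False]"
    by (simp add: Xi_bounce_def bounce_steps_def[abs_def] n_def k_def)
  then have dyck: "dyck_of_set (tree_set T) = Xi_bounce T @ replicate k True"
    using concat_bounce_steps_bfs_list[OF assms] by (simp only: split) simp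
  have "tree_set T \<noteq> {}" using card_tree_set[of T] assms by auto
  then have "last (dyck_of_set (tree_set T)) = False"
    using last_dyck_of_set[OF finite_tree_set _ tree_set_disjoint_shift] by blast
  then have "k = 0" unfolding dyck
    by (cases k) (simp_all add: replicate_append_same[symmetric] del: replicate_append_same)
  then show ?thesis using dyck by simp
qed

lemma poset_iso_refl: "poset_iso n P P"
  unfolding poset_iso_def by (intro exI[of _ id]) auto

lemma phi_iso_class:
  assumes "finite S" "card S = n" "S \<inter> shift1 S = {}"
  shows "phi n (iso_class n (uip_rel S)) = dyck_of_set S"
proof -
  define good where "good S' \<longleftrightarrow> finite S' \<and> card S' = n \<and> S' \<inter> shift1 S' = {}
    \<and> uip_rel S' \<in> iso_class n (uip_rel S)" for S'
  have "good S" unfolding good_def iso_class_def using assms uip_rel_subset[of S] poset_iso_refl by auto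
  then have S': "good (SOME S'. good S')" by (rule someI)
  define S' where "S' = (SOME S'. good S')"
  have S': "finite S'" "card S' = n" "S' \<inter> shift1 S' = {}" "poset_iso n (uip_rel S) (uip_rel S')"
    using S' unfolding S'_def good_def iso_class_def by auto
  have "pred_counts S = pred_counts S'" by (rule pred_counts_eq_if_poset_iso[OF assms(1) S'(1) assms(2) S'(2,4)])
  then have "dyck_of_set S' = dyck_of_set S"
    using dyck_of_set_eq_word_of_columns assms S' by simp
  moreover have "phi n (iso_class n (uip_rel S)) = dyck_of_set S'"
    unfolding phi_def S'_def good_def by simp
  ultimately show ?thesis by simp
qed

lemma UIP_representative:
  assumes "C \<in> UIP n"
  obtains S where "finite S" "card S = n" "S \<inter> shift1 S = {}" "C = iso_class n (uip_rel S)"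
proof -
  obtain S where S: "C = iso_class n (uip_rel S)" "finite S" "card S = n"
    using assms unfolding UIP_def by auto
  obtain S' where "finite S'" "card S' = card S" "S' \<inter> shift1 S' = {}" "uip_rel S' = uip_rel S"
    using exists_avoiding_set_same_uip_rel[OF S(2)] .
  then show ?thesis using that S by simp
qed

lemma phi_Xi_poset:
  assumes "1 \<le> num_nodes T"
  shows "phi (num_nodes T) (Xi_poset T) = Xi_bounce T"
  unfolding Xi_poset_def
  by (simp add: phi_iso_class finite_tree_set card_tree_set tree_set_disjoint_shift
      Xi_bounce_eq_dyck_of_set[OF assms])

lemma inj_on_phi_UIP: "inj_on (phi n) (UIP n)"
proof (rule inj_onI)
  fix C1 C2 assume "C1 \<in> UIP n" "C2 \<in> UIP n" and eq: "phi n C1 = phi n C2"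
  obtain S1 where S1: "finite S1" "card S1 = n" "S1 \<inter> shift1 S1 = {}" "C1 = iso_class n (uip_rel S1)"
    using UIP_representative[OF \<open>C1 \<in> UIP n\<close>] by blast
  obtain S2 where S2: "finite S2" "card S2 = n" "S2 \<inter> shift1 S2 = {}" "C2 = iso_class n (uip_rel S2)"
    using UIP_representative[OF \<open>C2 \<in> UIP n\<close>] by blast
  have words: "word_of_columns 0 (pred_counts S1) n = word_of_columns 0 (pred_counts S2) n"
    using eq S1 S2 by (simp add: phi_iso_class dyck_of_set_eq_word_of_columns)
  have columns: "columns_of_word 0 (word_of_columns 0 (pred_counts S) n) = pred_counts S"
    if "finite S" for S
    using sorted_pred_counts[OF that] by (intro columns_of_word_of_columns) simp
  have "pred_counts S1 = pred_counts S2"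
    using columns[OF S1(1)] columns[OF S2(1)] unfolding words by simp
  then have "uip_rel S1 = uip_rel S2"
    using S1(2) S2(2) by (intro uip_rel_eq_if_pred_counts_eq[OF S1(1) S2(1)]) simp_all
  then show "C1 = C2" using S1(4) S2(4) by simp
qed

lemma phi_image_UIP: "phi n ` UIP n = Dyck n"
proof (intro equalityI subsetI)
  fix w assume "w \<in> phi n ` UIP n"
  then obtain C where "C \<in> UIP n" "w = phi n C" by blast
  moreover obtain S where "finite S" "card S = n" "S \<inter> shift1 S = {}" "C = iso_class n (uip_rel S)"
    using UIP_representative[OF \<open>C \<in> UIP n\<close>] by blast
  ultimately show "w \<in> Dyck n" using dyck_of_set_in_Dyck phi_iso_class by simp
next
  fix w assume "w \<in> Dyck n"
  then obtain S where S: "finite S" "card S = n" "S \<inter> shift1 S = {}" "dyck_of_set S = w"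
    by (rule Dyck_eq_dyck_of_set)
  then have "iso_class n (uip_rel S) \<in> UIP n" unfolding UIP_def by auto
  then show "w \<in> phi n ` UIP n" using phi_iso_class[OF S(1-3)] S(4) by force
qed

theorem mainTheorem3:
  fixes n :: nat
  assumes "n \<ge> 1"
  shows "(\<forall>T. num_nodes T = n \<longrightarrow> phi n (Xi_poset T) = Xi_bounce T)
         \<and> bij_betw (phi n) (UIP n) (Dyck n)"
  using phi_Xi_poset assms inj_on_phi_UIP phi_image_UIP by (auto simp: bij_betw_def)

end
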